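(* (Generalized Multidimensional Fractional Noether's Theorem.) Let $n\ge1$, $\Omega_n=(a_1,b_1)\times\dots\times(a_n,b_n)$, and for $i=1,\dots,n$ let $\lambda_i,\mu_i\in\mathbb{R}$, $k_i\in L^1(0,b_i-a_i;\mathbb{R})$, and $K_{P_i},K_{P_i^*},A_{P_i^*},B_{P_i}$ be as in the context. Let $F:\mathbb{R}\times\mathbb{R}^{3n}\times\overline{\Omega}_n\to\mathbb{R}$ be of class $C^1$ and $(\star_y)(t)=(y(t),\nabla_{K_P}[y](t),\nabla[y](t),\nabla_{B_P}[y](t),t)$. Let $\phi:[-\varepsilon,\varepsilon]\times\overline{\Omega}_n\times\mathbb{R}\to\mathbb{R}$ be of class $C^2$ with $\phi(0,t,x)=x$, $\xi(t,x)=\frac{\partial\phi}{\partial\theta}(0,t,x)$ and $\hat y(t)=\phi(\theta,t,y(t))$. Suppose $F$ is invariant: $t\mapsto\xi(t,y(t))\in C^1(\overline{\Omega}_n;\mathbb{R})$ with $K_{P_i}[\xi(\cdot,y(\cdot))],B_{P_i}[\xi(\cdot,y(\cdot))]\in C(\overline{\Omega}_n;\mathbb{R})$, and $F(\star_y)(t)=F(\star_{\hat y})(t)$ for all $\theta\in[-\varepsilon,\varepsilon]$ and all $y\in C^1(\overline{\Omega}_n;\mathbb{R})$ with $K_{P_i}[y],B_{P_i}[y]\in C(\overline{\Omega}_n;\mathbb{R})$, $i=1,\dots,n$. Then for every generalized fractional extremal $y$ and $t\in\Omega_n$, $$\sum_{i=1}^n\Big(\mathbf{I}_i\big[\xi(\cdot,y(\cdot)),\partial_{1+i}F(\star_y)\big](t)+\frac{\partial}{\partial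 t_i}\big(\xi(t,y(t))\,\partial_{1+n+i}F(\star_y)(t)\big)+\mathbf{D}_i\big[\xi(\cdot,y(\cdot)),\partial_{1+2n+i}F(\star_y)\big](t)\Big)=0,$$ where $\mathbf{D}_i[f,g]=f\cdot A_{P_i^*}[g]+g\cdot B_{P_i}[f]$ and $\mathbf{I}_i[f,g]=-f\cdot K_{P_i^*}[g]+g\cdot K_{P_i}[f]$.
   Context: For $i=1,\dots,n$: $K_{P_i}[f](t)=\lambda_i\int_{a_i}^{t_i}k_i(t_i-\tau)f(t_1,..,\tau,..,t_n)d\tau+\mu_i\int_{t_i}^{b_i}k_i(\tau-t_i)f(t_1,..,\tau,..,t_n)d\tau$ ($\tau$ in the $i$-th slot); $K_{P_i^*}$ is the same with $\lambda_i,\mu_i$ interchanged; $A_{P_i^*}=\frac{\partial}{\partial t_i}\circ K_{P_i^*}$; $B_{P_i}=K_{P_i}\circ\frac{\partial}{\partial t_i}$; $\nabla_{K_P}[y]=(K_{P_1}[y],..,K_{P_n}[y])$, $\nabla_{B_P}[y]=(B_{P_1}[y],..,B_{P_n}[y])$. $F(x_1,x_2,x_3,x_4,t)$ with $x_1\in\mathbb{R}$, $x_2,x_3,x_4\in\mathbb{R}^n$; $\partial_jF$ is the partial derivative in the $j$-th scalar argument. A generalized fractional extremal is $y\in C^1(\overline{\Omega}_n;\mathbb{R})$ with $K_{P_i}[y],B_{P_i}[y]\in C(\overline{\Omega}_n;\mathbb{R})$ satisfying on $\Omega_n$ the equation $\partial_1F(\star_y)+\sum_{i=1}^n\big(K_{P_i^*}[\partial_{1+i}F(\star_y)]-\frac{\partial}{\partial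 t_i}\partial_{1+n+i}F(\star_y)-A_{P_i^*}[\partial_{1+2n+i}F(\star_y)]\big)=0$ (with $K_{P_i^*}[\partial_{1+i}F(\star_y)]$ continuous and $\partial_{1+n+i}F(\star_y)$, $K_{P_i^*}[\partial_{1+2n+i}F(\star_y)]$ continuously differentiable on $\overline{\Omega}_n$). *)

theory Defs
  imports "HOL-Analysis.Analysis"
begin

text \<open>Points of the closed box are vectors t :: real^'n; the box is cbox a b,
  its interior (the open box Omega_n) is box a b.\<close>

definition C1_on :: "'a::real_normed_vector set \<Rightarrow> ('a \<Rightarrow> 'b::real_normed_vector) \<Rightarrow> bool" where
  "C1_on S f \<longleftrightarrow> (\<exists>f' :: 'a \<Rightarrow> ('a \<Rightarrow>\<^sub>L 'b).
      (\<forall>x\<in>S. (f has_derivative blinfun_apply (f' x)) (at x within S)) \<and> continuous_on S f')"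

definition C2_on :: "'a::real_normed_vector set \<Rightarrow> ('a \<Rightarrow> 'b::real_normed_vector) \<Rightarrow> bool" where
  "C2_on S f \<longleftrightarrow> (\<exists>f' :: 'a \<Rightarrow> ('a \<Rightarrow>\<^sub>L 'b).
      (\<forall>x\<in>S. (f has_derivative blinfun_apply (f' x)) (at x within S)) \<and> C1_on S f')"

definition upd :: "real^'n \<Rightarrow> 'n \<Rightarrow> real \<Rightarrow> real^'n" where
  "upd t i s = (\<chi> j. if j = i then s else t $ j)"

text \<open>Partial derivative in t_i of a function on the closed box (one-sided at the faces).\<close>
definition pd :: "real^'n \<Rightarrow> real^'n \<Rightarrow> 'n \<Rightarrow> (real^'n \<Rightarrow> real) \<Rightarrow> real^'n \<Rightarrow> real" where
  "pd a b i f t = vector_derivative (\<lambda>s. f (upd t i s)) (at (t $ i) within {a $ i .. b $ i})"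

definition KP :: "real^'n \<Rightarrow> real^'n \<Rightarrow> 'n \<Rightarrow> real \<Rightarrow> real \<Rightarrow> (real \<Rightarrow> real)
                   \<Rightarrow> (real^'n \<Rightarrow> real) \<Rightarrow> real^'n \<Rightarrow> real" where
  "KP a b i lam mu ki f t =
     lam * integral {a $ i .. t $ i} (\<lambda>\<tau>. ki (t $ i - \<tau>) * f (upd t i \<tau>))
   + mu * integral {t $ i .. b $ i} (\<lambda>\<tau>. ki (\<tau> - t $ i) * f (upd t i \<tau>))"

definition KPs :: "real^'n \<Rightarrow> real^'n \<Rightarrow> 'n \<Rightarrow> real \<Rightarrow> real \<Rightarrow> (real \<Rightarrow> real)
                   \<Rightarrow> (real^'n \<Rightarrow> real) \<Rightarrow> real^'n \<Rightarrow> real" where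
  "KPs a b i lam mu ki f = KP a b i mu lam ki f"

definition APs :: "real^'n \<Rightarrow> real^'n \<Rightarrow> 'n \<Rightarrow> real \<Rightarrow> real \<Rightarrow> (real \<Rightarrow> real)
                   \<Rightarrow> (real^'n \<Rightarrow> real) \<Rightarrow> real^'n \<Rightarrow> real" where
  "APs a b i lam mu ki f = pd a b i (KPs a b i lam mu ki f)"

definition BP :: "real^'n \<Rightarrow> real^'n \<Rightarrow> 'n \<Rightarrow> real \<Rightarrow> real \<Rightarrow> (real \<Rightarrow> real)
                   \<Rightarrow> (real^'n \<Rightarrow> real) \<Rightarrow> real^'n \<Rightarrow> real" where
  "BP a b i lam mu ki f = KP a b i lam mu ki (pd a b i f)"

definition starv :: "real^'n \<Rightarrow> real^'n \<Rightarrow> ('n \<Rightarrow> real) \<Rightarrow> ('n \<Rightarrow> real) \<Rightarrow> ('n \<Rightarrow> real \<Rightarrow> real)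
     \<Rightarrow> (real^'n \<Rightarrow> real) \<Rightarrow> real^'n \<Rightarrow> real \<times> (real^'n) \<times> (real^'n) \<times> (real^'n) \<times> (real^'n)" where
  "starv a b lam mu k y t =
     (y t, (\<chi> i. KP a b i (lam i) (mu i) (k i) y t), (\<chi> i. pd a b i y t),
      (\<chi> i. BP a b i (lam i) (mu i) (k i) y t), t)"

text \<open>Partial derivatives of F(x1,x2,x3,x4,t) in the scalar arguments:
  dF1 = partial_1, dF2 i = partial_{1+i}, dF3 i = partial_{1+n+i}, dF4 i = partial_{1+2n+i}.\<close>
definition dF1 :: "(real \<times> (real^'n) \<times> (real^'n) \<times> (real^'n) \<times> (real^'n) \<Rightarrow> real)
                   \<Rightarrow> real \<times> (real^'n) \<times> (real^'n) \<times> (real^'n) \<times> (real^'n) \<Rightarrow> real" where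
  "dF1 F z = (case z of (x1, x2, x3, x4, t) \<Rightarrow> deriv (\<lambda>s. F (s, x2, x3, x4, t)) x1)"

definition dF2 :: "(real \<times> (real^'n) \<times> (real^'n) \<times> (real^'n) \<times> (real^'n) \<Rightarrow> real)
                   \<Rightarrow> 'n \<Rightarrow> real \<times> (real^'n) \<times> (real^'n) \<times> (real^'n) \<times> (real^'n) \<Rightarrow> real" where
  "dF2 F i z = (case z of (x1, x2, x3, x4, t) \<Rightarrow> deriv (\<lambda>s. F (x1, upd x2 i s, x3, x4, t)) (x2 $ i))"

definition dF3 :: "(real \<times> (real^'n) \<times> (real^'n) \<times> (real^'n) \<times> (real^'n) \<Rightarrow> real)
                   \<Rightarrow> 'n \<Rightarrow> real \<times> (real^'n) \<times> (real^'n) \<times> (real^'n) \<times> (real^'n) \<Rightarrow> real" where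
  "dF3 F i z = (case z of (x1, x2, x3, x4, t) \<Rightarrow> deriv (\<lambda>s. F (x1, x2, upd x3 i s, x4, t)) (x3 $ i))"

definition dF4 :: "(real \<times> (real^'n) \<times> (real^'n) \<times> (real^'n) \<times> (real^'n) \<Rightarrow> real)
                   \<Rightarrow> 'n \<Rightarrow> real \<times> (real^'n) \<times> (real^'n) \<times> (real^'n) \<times> (real^'n) \<Rightarrow> real" where
  "dF4 F i z = (case z of (x1, x2, x3, x4, t) \<Rightarrow> deriv (\<lambda>s. F (x1, x2, x3, upd x4 i s, t)) (x4 $ i))"

definition admissible :: "real^'n \<Rightarrow> real^'n \<Rightarrow> ('n \<Rightarrow> real) \<Rightarrow> ('n \<Rightarrow> real) \<Rightarrow> ('n \<Rightarrow> real \<Rightarrow> real)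
     \<Rightarrow> (real^'n \<Rightarrow> real) \<Rightarrow> bool" where
  "admissible a b lam mu k y \<longleftrightarrow> C1_on (cbox a b) y \<and>
     (\<forall>i. continuous_on (cbox a b) (KP a b i (lam i) (mu i) (k i) y) \<and>
          continuous_on (cbox a b) (BP a b i (lam i) (mu i) (k i) y))"

definition gen_frac_extremal :: "real^'n \<Rightarrow> real^'n \<Rightarrow> ('n \<Rightarrow> real) \<Rightarrow> ('n \<Rightarrow> real) \<Rightarrow> ('n \<Rightarrow> real \<Rightarrow> real)
     \<Rightarrow> (real \<times> (real^'n) \<times> (real^'n) \<times> (real^'n) \<times> (real^'n) \<Rightarrow> real) \<Rightarrow> (real^'n \<Rightarrow> real) \<Rightarrow> bool" where
  "gen_frac_extremal a b lam mu k F y \<longleftrightarrow>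
     admissible a b lam mu k y \<and>
     (\<forall>i. continuous_on (cbox a b)
            (KPs a b i (lam i) (mu i) (k i) (\<lambda>s. dF2 F i (starv a b lam mu k y s))) \<and>
          C1_on (cbox a b) (\<lambda>s. dF3 F i (starv a b lam mu k y s)) \<and>
          C1_on (cbox a b)
            (KPs a b i (lam i) (mu i) (k i) (\<lambda>s. dF4 F i (starv a b lam mu k y s)))) \<and>
     (\<forall>t\<in>box a b.
        dF1 F (starv a b lam mu k y t) +
        (\<Sum>i\<in>UNIV.
            KPs a b i (lam i) (mu i) (k i) (\<lambda>s. dF2 F i (starv a b lam mu k y s)) t
          - pd a b i (\<lambda>s. dF3 F i (starv a b lam mu k y s)) t
          - APs a b i (lam i) (mu i) (k i) (\<lambda>s. dF4 F i (starv a b lam mu k y s)) t) = 0)"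

definition xi :: "(real \<times> (real^'n) \<times> real \<Rightarrow> real) \<Rightarrow> real^'n \<Rightarrow> real \<Rightarrow> real" where
  "xi phi t x = deriv (\<lambda>\<theta>. phi (\<theta>, t, x)) 0"

definition DD :: "real^'n \<Rightarrow> real^'n \<Rightarrow> 'n \<Rightarrow> real \<Rightarrow> real \<Rightarrow> (real \<Rightarrow> real)
     \<Rightarrow> (real^'n \<Rightarrow> real) \<Rightarrow> (real^'n \<Rightarrow> real) \<Rightarrow> real^'n \<Rightarrow> real" where
  "DD a b i lam mu ki f g t = f t * APs a b i lam mu ki g t + g t * BP a b i lam mu ki f t"

definition II :: "real^'n \<Rightarrow> real^'n \<Rightarrow> 'n \<Rightarrow> real \<Rightarrow> real \<Rightarrow> (real \<Rightarrow> real)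
     \<Rightarrow> (real^'n \<Rightarrow> real) \<Rightarrow> (real^'n \<Rightarrow> real) \<Rightarrow> real^'n \<Rightarrow> real" where
  "II a b i lam mu ki f g t = - f t * KPs a b i lam mu ki g t + g t * KP a b i lam mu ki f t"

end

theory Submission
  imports Defs
begin

text \<open>
  Write y_\<theta>(t) = \<phi>(\<theta>, t, y(t)) and \<xi>(t) = \<xi>(t, y(t)). The first four components of \<star>(y_\<theta>)(t) are
  differentiable in \<theta> at 0, with derivatives the corresponding components of \<star>(\<xi>)(t): for K_P
  and B_P this is differentiation under the integral sign, justified because the first-order expansion
  of \<phi> in \<theta> is uniform on the compact box; for the partial derivatives it is the exchange of
  \<partial>/\<partial>t_i and \<partial>/\<partial>\<theta>. Differentiating the invariance identity F(\<star>(y))(t) = F(\<star>(y_\<theta>))(t) by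
  the chain rule therefore gives the infinitesimal invariance condition
  \<xi> \<partial>_1F + \<Sum>_i (K_P_i[\<xi>] \<partial>_{1+i}F + \<partial>\<xi>/\<partial>t_i \<partial>_{1+n+i}F + B_P_i[\<xi>] \<partial>_{1+2n+i}F) = 0 along \<star>(y).
  Subtracting \<xi> times the Euler-Lagrange equation and using the product rule for
  \<partial>/\<partial>t_i (\<xi> \<partial>_{1+n+i}F) turns it into the conservation law.
\<close>

section \<open>Coordinate lines and partial derivatives\<close>

lemma upd_nth: "upd r i s $ j = (if j = i then s else r $ j)"
  by (simp add: upd_def)

lemma upd_self [simp]: "upd r i (r $ i) = r"
  by (simp add: upd_def vec_eq_iff)

lemma upd_eq_add_axis: "upd r i s = r + (s - r $ i) *\<^sub>R axis i 1"
  by (simp add: upd_def vec_eq_iff axis_def)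

lemma upd_in_cbox: "r \<in> cbox a b \<Longrightarrow> s \<in> {a $ i .. b $ i} \<Longrightarrow> upd r i s \<in> cbox a b"
  by (auto simp: mem_box_cart upd_nth)

lemma has_derivative_upd: "((\<lambda>s. upd r i s) has_derivative (\<lambda>h. h *\<^sub>R axis i 1)) F"
  unfolding upd_eq_add_axis by (auto intro!: derivative_eq_intros)

lemma continuous_on_upd_line:
  "continuous_on (cbox a b) f \<Longrightarrow> t \<in> cbox a b \<Longrightarrow> S \<subseteq> {a $ i .. b $ i} \<Longrightarrow>
    continuous_on S (\<lambda>\<tau>. f (upd t i \<tau>))"
  by (rule continuous_on_compose2[of "cbox a b" f])
     (auto simp: upd_in_cbox intro: has_derivative_continuous_on[OF has_derivative_upd])

lemma pd_eqI:
  assumes "a $ i < b $ i" and "t \<in> cbox a b"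
    and "((\<lambda>s. f (upd t i s)) has_real_derivative D) (at (t $ i) within {a $ i .. b $ i})"
  shows "pd a b i f t = D"
  using assms vector_derivative_within_cbox[of "a $ i" "b $ i" "t $ i"]
  by (simp add: pd_def mem_box_cart has_real_derivative_iff_has_vector_derivative)

lemma pd_cong:
  assumes t: "t \<in> cbox a b" and fg: "\<forall>r\<in>cbox a b. f r = g r"
  shows "pd a b i f t = pd a b i g t"
proof -
  have "f (upd t i s) = g (upd t i s)" if "s \<in> {a $ i .. b $ i}" for s
    using fg upd_in_cbox[OF t that] by blast
  then have "((\<lambda>s. f (upd t i s)) has_vector_derivative D) (at (t $ i) within {a $ i .. b $ i}) \<longleftrightarrow>
        ((\<lambda>s. g (upd t i s)) has_vector_derivative D) (at (t $ i) within {a $ i .. b $ i})" for D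
    using has_vector_derivative_transform_within[of _ D "t $ i" "{a $ i .. b $ i}" 1] t
    by (auto simp: mem_box_cart)
  then show ?thesis unfolding pd_def vector_derivative_def by simp
qed

lemma has_real_derivative_pd:
  assumes ab: "a $ i < b $ i" and f: "C1_on (cbox a b) f" and t: "t \<in> cbox a b"
  shows "((\<lambda>s. f (upd t i s)) has_real_derivative pd a b i f t) (at (t $ i) within {a $ i .. b $ i})"
proof -
  obtain f' where f': "\<forall>x\<in>cbox a b. (f has_derivative blinfun_apply (f' x)) (at x within cbox a b)"
    using f unfolding C1_on_def by blast
  have "((\<lambda>s. f (upd t i s)) has_derivative (\<lambda>h. blinfun_apply (f' (upd t i (t $ i))) (h *\<^sub>R axis i 1)))
      (at (t $ i) within {a $ i .. b $ i})"
    by (rule has_derivative_in_compose2[of "cbox a b" f "\<lambda>x. blinfun_apply (f' x)"])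
       (use f' t upd_in_cbox[OF t] in \<open>auto simp: mem_box_cart intro: has_derivative_upd\<close>)
  then have "((\<lambda>s. f (upd t i s)) has_real_derivative blinfun_apply (f' t) (axis i 1))
      (at (t $ i) within {a $ i .. b $ i})"
    by (rule has_derivative_imp_has_field_derivative) (simp add: blinfun.scaleR_right)
  with pd_eqI[OF ab t this] show ?thesis by simp
qed

lemma pd_mult:
  assumes "a $ i < b $ i" and f: "C1_on (cbox a b) f" and g: "C1_on (cbox a b) g" and t: "t \<in> cbox a b"
  shows "pd a b i (\<lambda>s. f s * g s) t = pd a b i f t * g t + f t * pd a b i g t"
  using assms by (intro pd_eqI) (auto intro!: derivative_eq_intros has_real_derivative_pd)

section \<open>The operators K_P\<close>

lemma absolutely_integrable_reflected_kernel:
  fixes g :: "real \<Rightarrow> real"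
  assumes g: "g absolutely_integrable_on {0..L}" and c: "c0 \<le> c" "c - c0 \<le> L"
  shows "(\<lambda>\<tau>. g (c - \<tau>)) absolutely_integrable_on {c0..c}"
    and "integral {c0..c} (\<lambda>\<tau>. \<bar>g (c - \<tau>)\<bar>) \<le> integral {0..L} (\<lambda>x. \<bar>g x\<bar>)"
proof -
  have g1: "g absolutely_integrable_on {0..c - c0}"
    using g c by (rule_tac absolutely_integrable_on_subinterval) auto
  then have "(\<lambda>x. g (-x)) absolutely_integrable_on {-(c - c0)..-0}"
    by (simp only: absolutely_integrable_reflect_real)
  then have i: "(\<lambda>x. g (-x)) integrable_on {-(c - c0)..-0}" "(\<lambda>x. \<bar>g (-x)\<bar>) integrable_on {-(c - c0)..-0}"
    by (auto simp: absolutely_integrable_on_def)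
  have shift: "{-(c - c0) - (-c) .. -0 - (-c)} = {c0..c}" by auto
  show "(\<lambda>\<tau>. g (c - \<tau>)) absolutely_integrable_on {c0..c}"
    using integrable_shift_real_ivl[OF i(1), of "-c"] integrable_shift_real_ivl[OF i(2), of "-c"] shift
    by (simp add: absolutely_integrable_on_def)
  have "integral {c0..c} (\<lambda>\<tau>. \<bar>g (c - \<tau>)\<bar>) = integral {-(c - c0)..-0} (\<lambda>x. \<bar>g (-x)\<bar>)"
    using integral_shift_real_ivl[of "-(c - c0)" "-c" "-0" "\<lambda>x. \<bar>g (-x)\<bar>"] shift by simp
  also have "\<dots> = integral {0..c - c0} (\<lambda>x. \<bar>g x\<bar>)"
    using Henstock_Kurzweil_Integration.integral_reflect_real[of "c - c0" 0 "\<lambda>x. \<bar>g x\<bar>"] by simp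
  also have "\<dots> \<le> integral {0..L} (\<lambda>x. \<bar>g x\<bar>)"
    using g g1 c by (intro integral_subset_le) (auto simp: absolutely_integrable_on_def)
  finally show "integral {c0..c} (\<lambda>\<tau>. \<bar>g (c - \<tau>)\<bar>) \<le> integral {0..L} (\<lambda>x. \<bar>g x\<bar>)" .
qed

lemma absolutely_integrable_shifted_kernel:
  fixes g :: "real \<Rightarrow> real"
  assumes g: "g absolutely_integrable_on {0..L}" and c: "c \<le> d" "d - c \<le> L"
  shows "(\<lambda>\<tau>. g (\<tau> - c)) absolutely_integrable_on {c..d}"
    and "integral {c..d} (\<lambda>\<tau>. \<bar>g (\<tau> - c)\<bar>) \<le> integral {0..L} (\<lambda>x. \<bar>g x\<bar>)"
proof -
  have g1: "g absolutely_integrable_on {0..d - c}"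
    using g c by (rule_tac absolutely_integrable_on_subinterval) auto
  then have i: "g integrable_on {0..d - c}" "(\<lambda>x. \<bar>g x\<bar>) integrable_on {0..d - c}"
    by (auto simp: absolutely_integrable_on_def)
  have shift: "{0 - (-c) .. (d - c) - (-c)} = {c..d}" by auto
  show "(\<lambda>\<tau>. g (\<tau> - c)) absolutely_integrable_on {c..d}"
    using integrable_shift_real_ivl[OF i(1), of "-c"] integrable_shift_real_ivl[OF i(2), of "-c"] shift
    by (simp add: absolutely_integrable_on_def)
  have "integral {c..d} (\<lambda>\<tau>. \<bar>g (\<tau> - c)\<bar>) = integral {0..d - c} (\<lambda>x. \<bar>g x\<bar>)"
    using integral_shift_real_ivl[of 0 "-c" "d - c" "\<lambda>x. \<bar>g x\<bar>"] shift by simp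
  also have "\<dots> \<le> integral {0..L} (\<lambda>x. \<bar>g x\<bar>)"
    using g g1 c by (intro integral_subset_le) (auto simp: absolutely_integrable_on_def)
  finally show "integral {c..d} (\<lambda>\<tau>. \<bar>g (\<tau> - c)\<bar>) \<le> integral {0..L} (\<lambda>x. \<bar>g x\<bar>)" .
qed

lemma absolutely_integrable_kernel_mult:
  fixes g f :: "real \<Rightarrow> real"
  assumes g: "g absolutely_integrable_on {c..d}" and f: "continuous_on {c..d} f"
  shows "(\<lambda>\<tau>. g \<tau> * f \<tau>) absolutely_integrable_on {c..d}"
proof -
  have "(\<lambda>\<tau>. f \<tau> * g \<tau>) absolutely_integrable_on {c..d}"
    using f g by (intro absolutely_integrable_bounded_measurable_product_real
        continuous_imp_measurable_on_sets_lebesgue compact_imp_bounded compact_continuous_image) auto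
  then show ?thesis by (simp add: mult.commute)
qed

lemma kernel_mult_integral_bound:
  fixes g f :: "real \<Rightarrow> real"
  assumes g: "g absolutely_integrable_on {c..d}" and f: "continuous_on {c..d} f"
    and B: "\<forall>\<tau>\<in>{c..d}. \<bar>f \<tau>\<bar> \<le> B"
  shows "\<bar>integral {c..d} (\<lambda>\<tau>. g \<tau> * f \<tau>)\<bar> \<le> integral {c..d} (\<lambda>\<tau>. \<bar>g \<tau>\<bar>) * B"
proof -
  have "\<bar>integral {c..d} (\<lambda>\<tau>. g \<tau> * f \<tau>)\<bar> \<le> integral {c..d} (\<lambda>\<tau>. \<bar>g \<tau>\<bar> * B)"
    using absolutely_integrable_kernel_mult[OF g f] g B
    by (intro integral_norm_bound_integral[where f="\<lambda>\<tau>. g \<tau> * f \<tau>", simplified])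
       (auto simp: absolutely_integrable_on_def abs_mult integrable_on_mult_left intro: mult_left_mono)
  then show ?thesis by simp
qed

lemma KP_integrands_absolutely_integrable:
  fixes a b t :: "real^'n" and f :: "real^'n \<Rightarrow> real"
  assumes ki: "ki absolutely_integrable_on {0..b $ i - a $ i}" and t: "t \<in> cbox a b"
    and f: "continuous_on (cbox a b) f"
  shows "(\<lambda>\<tau>. ki (t $ i - \<tau>) * f (upd t i \<tau>)) absolutely_integrable_on {a $ i..t $ i}"
    and "(\<lambda>\<tau>. ki (\<tau> - t $ i) * f (upd t i \<tau>)) absolutely_integrable_on {t $ i..b $ i}"
proof -
  have ti: "a $ i \<le> t $ i" "t $ i \<le> b $ i" using t by (auto simp: mem_box_cart)
  show "(\<lambda>\<tau>. ki (t $ i - \<tau>) * f (upd t i \<tau>)) absolutely_integrable_on {a $ i..t $ i}"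
    "(\<lambda>\<tau>. ki (\<tau> - t $ i) * f (upd t i \<tau>)) absolutely_integrable_on {t $ i..b $ i}"
    using ti by (auto intro!: absolutely_integrable_kernel_mult continuous_on_upd_line[OF f t]
        absolutely_integrable_reflected_kernel(1)[OF ki] absolutely_integrable_shifted_kernel(1)[OF ki])
qed

lemma KP_bound:
  fixes a b t :: "real^'n" and f :: "real^'n \<Rightarrow> real"
  assumes ki: "ki absolutely_integrable_on {0..b $ i - a $ i}" and t: "t \<in> cbox a b"
    and f: "continuous_on (cbox a b) f" and B: "\<forall>r\<in>cbox a b. \<bar>f r\<bar> \<le> B"
  shows "\<bar>KP a b i l m ki f t\<bar> \<le> (\<bar>l\<bar> + \<bar>m\<bar>) * integral {0..b $ i - a $ i} (\<lambda>x. \<bar>ki x\<bar>) * B"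
proof -
  define M where "M = integral {0..b $ i - a $ i} (\<lambda>x. \<bar>ki x\<bar>)"
  have ti: "a $ i \<le> t $ i" "t $ i \<le> b $ i" using t by (auto simp: mem_box_cart)
  have B0: "0 \<le> B" using B t by force
  have Bline: "\<forall>\<tau>\<in>S. \<bar>f (upd t i \<tau>)\<bar> \<le> B" if "S \<subseteq> {a $ i..b $ i}" for S
    using B upd_in_cbox[OF t] that by blast
  have "\<bar>integral {a $ i..t $ i} (\<lambda>\<tau>. ki (t $ i - \<tau>) * f (upd t i \<tau>))\<bar>
      \<le> integral {a $ i..t $ i} (\<lambda>\<tau>. \<bar>ki (t $ i - \<tau>)\<bar>) * B"
    using ti by (intro kernel_mult_integral_bound absolutely_integrable_reflected_kernel(1)[OF ki]
        continuous_on_upd_line[OF f t] Bline) auto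
  also have "\<dots> \<le> M * B"
    unfolding M_def using absolutely_integrable_reflected_kernel(2)[OF ki] ti B0
    by (intro mult_right_mono) auto
  finally have left: "\<bar>integral {a $ i..t $ i} (\<lambda>\<tau>. ki (t $ i - \<tau>) * f (upd t i \<tau>))\<bar> \<le> M * B" .
  have "\<bar>integral {t $ i..b $ i} (\<lambda>\<tau>. ki (\<tau> - t $ i) * f (upd t i \<tau>))\<bar>
      \<le> integral {t $ i..b $ i} (\<lambda>\<tau>. \<bar>ki (\<tau> - t $ i)\<bar>) * B"
    using ti by (intro kernel_mult_integral_bound absolutely_integrable_shifted_kernel(1)[OF ki]
        continuous_on_upd_line[OF f t] Bline) auto
  also have "\<dots> \<le> M * B"
    unfolding M_def using absolutely_integrable_shifted_kernel(2)[OF ki] ti B0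
    by (intro mult_right_mono) auto
  finally have right: "\<bar>integral {t $ i..b $ i} (\<lambda>\<tau>. ki (\<tau> - t $ i) * f (upd t i \<tau>))\<bar> \<le> M * B" .
  have "\<bar>KP a b i l m ki f t\<bar> \<le> \<bar>l\<bar> * (M * B) + \<bar>m\<bar> * (M * B)"
    unfolding KP_def
    by (rule order_trans[OF abs_triangle_ineq]) (simp add: abs_mult add_mono mult_left_mono left right)
  then show ?thesis unfolding M_def by (simp add: algebra_simps)
qed

lemma KP_cong:
  assumes t: "t \<in> cbox a b" and fg: "\<forall>r\<in>cbox a b. f r = g r"
  shows "KP a b i l m ki f t = KP a b i l m ki g t"
proof -
  have ti: "a $ i \<le> t $ i" "t $ i \<le> b $ i" using t by (auto simp: mem_box_cart)
  have "f (upd t i \<tau>) = g (upd t i \<tau>)" if "\<tau> \<in> {a $ i..b $ i}" for \<tau>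
    using fg upd_in_cbox[OF t that] by blast
  with ti have "integral {a $ i..t $ i} (\<lambda>\<tau>. ki (t $ i - \<tau>) * f (upd t i \<tau>))
      = integral {a $ i..t $ i} (\<lambda>\<tau>. ki (t $ i - \<tau>) * g (upd t i \<tau>))"
    "integral {t $ i..b $ i} (\<lambda>\<tau>. ki (\<tau> - t $ i) * f (upd t i \<tau>))
      = integral {t $ i..b $ i} (\<lambda>\<tau>. ki (\<tau> - t $ i) * g (upd t i \<tau>))"
    by (auto intro!: integral_cong)
  then show ?thesis unfolding KP_def by simp
qed

lemma KP_cmult: "KP a b i l m ki (\<lambda>r. c * f r) t = c * KP a b i l m ki f t"
  by (simp add: KP_def mult.left_commute[of _ c] distrib_left)

lemma KP_diff:
  assumes ki: "ki absolutely_integrable_on {0..b $ i - a $ i}" and t: "t \<in> cbox a b"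
    and f: "continuous_on (cbox a b) f" and g: "continuous_on (cbox a b) g"
  shows "KP a b i l m ki (\<lambda>r. f r - g r) t = KP a b i l m ki f t - KP a b i l m ki g t"
  using KP_integrands_absolutely_integrable[OF ki t f] KP_integrands_absolutely_integrable[OF ki t g]
  by (simp add: KP_def right_diff_distrib integral_diff absolutely_integrable_on_def algebra_simps)

lemma has_derivative_KP_param:
  fixes a b t :: "real^'n" and w :: "real \<Rightarrow> real^'n \<Rightarrow> real" and v :: "real^'n \<Rightarrow> real"
  assumes ki: "ki absolutely_integrable_on {0..b $ i - a $ i}" and t: "t \<in> cbox a b"
    and w: "\<forall>\<theta>\<in>T. continuous_on (cbox a b) (w \<theta>)" and v: "continuous_on (cbox a b) v"
    and T: "0 \<in> T"
    and lin: "\<forall>e>0. \<forall>\<^sub>F \<theta> in at 0 within T. \<forall>r\<in>cbox a b. \<bar>w \<theta> r - w 0 r - \<theta> * v r\<bar> \<le> e * \<bar>\<theta>\<bar>"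
  shows "((\<lambda>\<theta>. KP a b i l m ki (w \<theta>) t) has_derivative (\<lambda>h. h * KP a b i l m ki v t)) (at 0 within T)"
  unfolding has_derivative_within_alt2
proof (intro conjI allI impI)
  show "bounded_linear (\<lambda>h. h * KP a b i l m ki v t)" by (simp add: bounded_linear_mult_left)
  fix e :: real assume e: "e > 0"
  define M where "M = (\<bar>l\<bar> + \<bar>m\<bar>) * integral {0..b $ i - a $ i} (\<lambda>x. \<bar>ki x\<bar>)"
  have M: "0 \<le> M"
    unfolding M_def using ki by (intro mult_nonneg_nonneg integral_nonneg) (auto simp: absolutely_integrable_on_def)
  have "\<forall>\<^sub>F \<theta> in at 0 within T. \<theta> \<in> T"
    by (simp add: eventually_at_filter)
  moreover have "\<forall>\<^sub>F \<theta> in at 0 within T. \<forall>r\<in>cbox a b. \<bar>w \<theta> r - w 0 r - \<theta> * v r\<bar> \<le> e / (M + 1) * \<bar>\<theta>\<bar>"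
  proof -
    have "e / (M + 1) > 0" using M e by simp
    then show ?thesis using lin by blast
  qed
  ultimately show "\<forall>\<^sub>F \<theta> in at 0 within T. norm (KP a b i l m ki (w \<theta>) t - KP a b i l m ki (w 0) t
      - (\<theta> - 0) * KP a b i l m ki v t) \<le> e * norm (\<theta> - 0)"
  proof eventually_elim
    case (elim \<theta>)
    then have w\<theta>: "continuous_on (cbox a b) (w \<theta>)" and w0: "continuous_on (cbox a b) (w 0)"
      using w T by auto
    have cont: "continuous_on (cbox a b) (\<lambda>r. (w \<theta> r - w 0 r) - \<theta> * v r)"
      using w\<theta> w0 v by (intro continuous_intros)
    have "KP a b i l m ki (w \<theta>) t - KP a b i l m ki (w 0) t - \<theta> * KP a b i l m ki v t
        = KP a b i l m ki (\<lambda>r. (w \<theta> r - w 0 r) - \<theta> * v r) t"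
      using w\<theta> w0 v by (simp add: KP_diff[OF ki t] KP_cmult continuous_on_diff continuous_on_mult_left)
    also have "\<bar>\<dots>\<bar> \<le> M * (e / (M + 1) * \<bar>\<theta>\<bar>)"
      using KP_bound[OF ki t cont elim(2), where l=l and m=m] unfolding M_def by simp
    also have "\<dots> \<le> e * \<bar>\<theta>\<bar>"
      using M e by (simp add: field_simps mult_right_mono)
    finally show ?case by simp
  qed
qed

section \<open>Uniform linearization and mixed partial derivatives\<close>

lemma uniform_linearization:
  fixes g :: "real \<Rightarrow> 'c::metric_space \<Rightarrow> 'b::real_normed_vector"
  assumes \<epsilon>: "0 < \<epsilon>" and C: "compact C"
    and der: "\<forall>c\<in>C. \<forall>s\<in>{-\<epsilon>..\<epsilon>}. ((\<lambda>\<theta>. g \<theta> c) has_derivative (\<lambda>h. h *\<^sub>R g' (s, c))) (at s within {-\<epsilon>..\<epsilon>})"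
    and cont: "continuous_on ({-\<epsilon>..\<epsilon>} \<times> C) g'"
  shows "\<forall>e>0. \<forall>\<^sub>F \<theta> in at 0 within {-\<epsilon>..\<epsilon>}. \<forall>c\<in>C. norm (g \<theta> c - g 0 c - \<theta> *\<^sub>R g' (0, c)) \<le> e * \<bar>\<theta>\<bar>"
proof (intro allI impI)
  fix e :: real assume e: "e > 0"
  have "uniformly_continuous_on ({-\<epsilon>..\<epsilon>} \<times> C) g'"
    using cont C by (intro compact_uniformly_continuous compact_Times) auto
  then obtain d where d: "d > 0"
    and uc: "\<forall>x\<in>{-\<epsilon>..\<epsilon>} \<times> C. \<forall>x'\<in>{-\<epsilon>..\<epsilon>} \<times> C. dist x' x < d \<longrightarrow> dist (g' x') (g' x) < e"
    unfolding uniformly_continuous_on_def using e by blast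
  have near0: "norm (g' (s, c) - g' (0, c)) \<le> e" if "c \<in> C" "s \<in> {-\<epsilon>..\<epsilon>}" "\<bar>s\<bar> < d" for s c
  proof -
    have "dist (s, c) (0, c) < d" using that by (simp add: dist_Pair_Pair)
    then show ?thesis using uc that \<epsilon> by (fastforce simp: dist_norm)
  qed
  show "\<forall>\<^sub>F \<theta> in at 0 within {-\<epsilon>..\<epsilon>}. \<forall>c\<in>C. norm (g \<theta> c - g 0 c - \<theta> *\<^sub>R g' (0, c)) \<le> e * \<bar>\<theta>\<bar>"
    unfolding eventually_at
  proof (intro exI[of _ d] conjI ballI impI)
    fix \<theta> c assume \<theta>: "\<theta> \<in> {-\<epsilon>..\<epsilon>}" "\<theta> \<noteq> 0 \<and> dist \<theta> 0 < d" and c: "c \<in> C"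
    define S where "S = closed_segment 0 \<theta>"
    have S: "S \<subseteq> {-\<epsilon>..\<epsilon>}" "\<And>s. s \<in> S \<Longrightarrow> \<bar>s\<bar> \<le> \<bar>\<theta>\<bar>"
      unfolding S_def using \<theta> \<epsilon> by (auto simp: closed_segment_eq_real_ivl split: if_splits)
    have "norm (g \<theta> c - g 0 c - (\<theta> - 0) *\<^sub>R g' (0, c)) \<le> norm (\<theta> - 0) * e"
    proof (rule differentiable_bound_linearization[where S=S and f="\<lambda>\<theta>. g \<theta> c" and f'="\<lambda>s h. h *\<^sub>R g' (s, c)"])
      show "0 + t *\<^sub>R (\<theta> - 0) \<in> S" if "t \<in> {0..1}" for t
        unfolding S_def using that by (auto simp: in_segment)
      show "((\<lambda>\<theta>. g \<theta> c) has_derivative (\<lambda>h. h *\<^sub>R g' (s, c))) (at s within S)" if "s \<in> S" for s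
        using der c that S by (meson has_derivative_subset subsetD)
      show "onorm ((\<lambda>h. h *\<^sub>R g' (s, c)) - (\<lambda>h. h *\<^sub>R g' (0, c))) \<le> e" if "s \<in> S" for s
      proof (rule onorm_le)
        fix h :: real
        have "norm (g' (s, c) - g' (0, c)) \<le> e" using near0 c that S \<theta> by force
        then show "norm (((\<lambda>h. h *\<^sub>R g' (s, c)) - (\<lambda>h. h *\<^sub>R g' (0, c))) h) \<le> e * norm h"
          by (simp add: scaleR_diff_right[symmetric] mult.commute[of e] mult_left_mono)
      qed
    qed (simp add: S_def)
    then show "norm (g \<theta> c - g 0 c - \<theta> *\<^sub>R g' (0, c)) \<le> e * \<bar>\<theta>\<bar>" by (simp add: mult.commute)
  qed (rule d)
qed

lemma uniform_difference_quotients: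
  fixes G :: "real \<Rightarrow> 'q \<Rightarrow> real"
  assumes lin: "\<forall>e>0. \<forall>\<^sub>F \<theta> in at 0 within T. \<forall>q\<in>Q. \<bar>G \<theta> q - G 0 q - \<theta> * D q\<bar> \<le> e * \<bar>\<theta>\<bar>"
    and \<theta>: "filterlim \<theta> (at 0 within T) sequentially"
  shows "\<forall>e>0. \<forall>\<^sub>F n in sequentially. \<forall>q\<in>Q. \<bar>(G (\<theta> n) q - G 0 q) / \<theta> n - D q\<bar> \<le> e"
proof (intro allI impI)
  fix e :: real assume e: "e > 0"
  have "\<forall>\<^sub>F n in sequentially. \<forall>q\<in>Q. \<bar>G (\<theta> n) q - G 0 q - \<theta> n * D q\<bar> \<le> e * \<bar>\<theta> n\<bar>"
    using \<theta> lin e unfolding filterlim_iff by blast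
  moreover have "\<forall>\<^sub>F n in sequentially. \<theta> n \<noteq> 0"
    using \<theta> unfolding filterlim_at by (auto elim: eventually_mono)
  ultimately show "\<forall>\<^sub>F n in sequentially. \<forall>q\<in>Q. \<bar>(G (\<theta> n) q - G 0 q) / \<theta> n - D q\<bar> \<le> e"
  proof eventually_elim
    case (elim n)
    have "\<bar>(G (\<theta> n) q - G 0 q) / \<theta> n - D q\<bar> = \<bar>G (\<theta> n) q - G 0 q - \<theta> n * D q\<bar> / \<bar>\<theta> n\<bar>" for q
      using elim(2) by (simp add: field_simps)
    with elim show ?case by (simp add: divide_le_eq)
  qed
qed

lemma filterlim_divide_Suc_at_0_within:
  assumes "0 < \<epsilon>"
  shows "filterlim (\<lambda>n. \<epsilon> / real (Suc n)) (at 0 within {-\<epsilon>..\<epsilon>}) sequentially"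
  unfolding filterlim_at
proof
  show "\<forall>\<^sub>F n in sequentially. \<epsilon> / real (Suc n) \<in> {-\<epsilon>..\<epsilon>} \<and> \<epsilon> / real (Suc n) \<noteq> 0"
    using assms by (auto simp: field_simps intro!: always_eventually)
  have "(\<lambda>n. \<epsilon> * inverse (real (Suc n))) \<longlonglongrightarrow> \<epsilon> * 0"
    by (intro tendsto_intros LIMSEQ_inverse_real_of_nat)
  then show "(\<lambda>n. \<epsilon> / real (Suc n)) \<longlonglongrightarrow> 0" by (simp add: divide_inverse)
qed

text \<open>A substitute for the symmetry of second derivatives: the difference quotients in \<theta>
  converge uniformly together with their derivatives in s.\<close>

lemma mixed_partials_commute:
  fixes G Gs :: "real \<Rightarrow> real \<Rightarrow> real" and Gt Gts :: "real \<Rightarrow> real"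
  assumes \<epsilon>: "0 < \<epsilon>" and I: "convex I" "s0 \<in> I"
    and Gs: "\<And>\<theta> s. \<theta> \<in> {-\<epsilon>..\<epsilon>} \<Longrightarrow> s \<in> I \<Longrightarrow> (G \<theta> has_real_derivative Gs \<theta> s) (at s within I)"
    and G_lin: "\<forall>e>0. \<forall>\<^sub>F \<theta> in at 0 within {-\<epsilon>..\<epsilon>}. \<forall>s\<in>I. \<bar>G \<theta> s - G 0 s - \<theta> * Gt s\<bar> \<le> e * \<bar>\<theta>\<bar>"
    and Gs_lin: "\<forall>e>0. \<forall>\<^sub>F \<theta> in at 0 within {-\<epsilon>..\<epsilon>}. \<forall>s\<in>I. \<bar>Gs \<theta> s - Gs 0 s - \<theta> * Gts s\<bar> \<le> e * \<bar>\<theta>\<bar>"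
  shows "(Gt has_real_derivative Gts s0) (at s0 within I)"
proof -
  define \<theta> where "\<theta> n = \<epsilon> / real (Suc n)" for n
  have \<theta>_in: "\<theta> n \<in> {-\<epsilon>..\<epsilon>}" for n
    unfolding \<theta>_def using \<epsilon> by (auto simp: field_simps)
  have \<theta>_lim: "filterlim \<theta> (at 0 within {-\<epsilon>..\<epsilon>}) sequentially"
    unfolding \<theta>_def by (rule filterlim_divide_Suc_at_0_within[OF \<epsilon>])
  define f where "f n s = (G (\<theta> n) s - G 0 s) / \<theta> n" for n s
  have f_der: "(f n has_derivative (\<lambda>h. h * ((Gs (\<theta> n) s - Gs 0 s) / \<theta> n))) (at s within I)"
    if "s \<in> I" for n s
  proof -
    have "(f n has_real_derivative (Gs (\<theta> n) s - Gs 0 s) / \<theta> n) (at s within I)"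
      unfolding f_def using \<theta>_in \<epsilon> that by (intro DERIV_cdivide DERIV_diff Gs) auto
    then show ?thesis
      unfolding has_field_derivative_def by (rule has_derivative_eq_rhs) (simp add: fun_eq_iff)
  qed
  have f_lim: "(\<lambda>n. f n s) \<longlonglongrightarrow> Gt s" if "s \<in> I" for s
    unfolding tendsto_iff
  proof (intro allI impI)
    fix e :: real assume "e > 0"
    then have "\<forall>\<^sub>F n in sequentially. \<forall>s\<in>I. \<bar>f n s - Gt s\<bar> \<le> e / 2"
      using uniform_difference_quotients[OF G_lin \<theta>_lim, rule_format, of "e / 2"] unfolding f_def by simp
    then show "\<forall>\<^sub>F n in sequentially. dist (f n s) (Gt s) < e"
      by eventually_elim (use that \<open>e > 0\<close> in \<open>auto simp: dist_real_def\<close>)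
  qed
  have "\<exists>g. \<forall>s\<in>I. (\<lambda>n. f n s) \<longlonglongrightarrow> g s \<and> (g has_derivative (\<lambda>h. h * Gts s)) (at s within I)"
  proof (rule has_derivative_sequence[OF I(1) f_der _ I(2) f_lim[OF I(2)]])
    fix e :: real assume "e > 0"
    with uniform_difference_quotients[OF Gs_lin \<theta>_lim]
    have "\<forall>\<^sub>F n in sequentially. \<forall>s\<in>I. \<bar>(Gs (\<theta> n) s - Gs 0 s) / \<theta> n - Gts s\<bar> \<le> e"
      by blast
    then show "\<forall>\<^sub>F n in sequentially. \<forall>s\<in>I. \<forall>h. norm (h * ((Gs (\<theta> n) s - Gs 0 s) / \<theta> n) - h * Gts s) \<le> e * norm h"
    proof eventually_elim
      case (elim n)
      show ?case
      proof (intro ballI allI)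
        fix s h assume "s \<in> I"
        then have "\<bar>h\<bar> * \<bar>(Gs (\<theta> n) s - Gs 0 s) / \<theta> n - Gts s\<bar> \<le> \<bar>h\<bar> * e"
          using elim by (intro mult_left_mono) auto
        then show "norm (h * ((Gs (\<theta> n) s - Gs 0 s) / \<theta> n) - h * Gts s) \<le> e * norm h"
          by (simp only: real_norm_def right_diff_distrib[symmetric] abs_mult mult.commute[of e])
      qed
    qed
  qed
  then obtain g where g: "\<forall>s\<in>I. (\<lambda>n. f n s) \<longlonglongrightarrow> g s \<and> (g has_derivative (\<lambda>h. h * Gts s)) (at s within I)"
    by blast
  have "(Gt has_derivative (\<lambda>h. h * Gts s0)) (at s0 within I)"
  proof (rule has_derivative_transform_within[OF _ zero_less_one I(2)])
    show "(g has_derivative (\<lambda>h. h * Gts s0)) (at s0 within I)" using g I(2) by blast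
    show "g s = Gt s" if "s \<in> I" "dist s s0 < 1" for s
      using g f_lim that LIMSEQ_unique by blast
  qed
  then show ?thesis by (rule has_derivative_imp_has_field_derivative) simp
qed

lemma has_derivative_vec_lambda:
  fixes f :: "real \<Rightarrow> 'n::finite \<Rightarrow> real"
  assumes "\<And>i. ((\<lambda>\<theta>. f \<theta> i) has_derivative (\<lambda>h. h * d i)) F"
  shows "((\<lambda>\<theta>. \<chi> i. f \<theta> i) has_derivative (\<lambda>h. h *\<^sub>R (\<chi> i. d i))) F"
proof -
  have vec_sum: "(\<chi> i. c i) = (\<Sum>i\<in>UNIV. c i *\<^sub>R axis i (1::real))" for c :: "'n \<Rightarrow> real"
    using basis_expansion[of "\<chi> i. c i"] by (simp add: scalar_mult_eq_scaleR)
  have "((\<lambda>\<theta>. \<Sum>i\<in>UNIV. f \<theta> i *\<^sub>R axis i (1::real)) has_derivative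
      (\<lambda>h. \<Sum>i\<in>UNIV. (h * d i) *\<^sub>R axis i (1::real))) F"
    by (intro has_derivative_sum has_derivative_scaleR_left assms)
  then show ?thesis by (simp add: vec_sum scaleR_sum_right)
qed

section \<open>Variations of an admissible function\<close>

lemma blinfun_apply_first_axis: "blinfun_apply L (h, 0, 0) = h *\<^sub>R blinfun_apply L (1, 0::real^'n, 0::real)"
  using blinfun.scaleR_right[of L h "(1, 0, 0)"] by simp

locale variation =
  fixes a b :: "real^'n" and \<epsilon> :: real
    and phi :: "real \<times> (real^'n) \<times> real \<Rightarrow> real"
    and phi' :: "real \<times> (real^'n) \<times> real \<Rightarrow> (real \<times> (real^'n) \<times> real) \<Rightarrow>\<^sub>L real"
    and phi'' :: "real \<times> (real^'n) \<times> real \<Rightarrow> (real \<times> (real^'n) \<times> real) \<Rightarrow>\<^sub>L (real \<times> (real^'n) \<times> real) \<Rightarrow>\<^sub>L real"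
    and y :: "real^'n \<Rightarrow> real" and y' :: "real^'n \<Rightarrow> (real^'n) \<Rightarrow>\<^sub>L real"
  assumes box: "\<forall>i. a $ i < b $ i" and eps: "0 < \<epsilon>"
    and phi': "\<forall>p\<in>{-\<epsilon>..\<epsilon>} \<times> cbox a b \<times> UNIV.
      (phi has_derivative blinfun_apply (phi' p)) (at p within {-\<epsilon>..\<epsilon>} \<times> cbox a b \<times> UNIV)"
    and phi'': "\<forall>p\<in>{-\<epsilon>..\<epsilon>} \<times> cbox a b \<times> UNIV.
      (phi' has_derivative blinfun_apply (phi'' p)) (at p within {-\<epsilon>..\<epsilon>} \<times> cbox a b \<times> UNIV)"
    and phi''_cont: "continuous_on ({-\<epsilon>..\<epsilon>} \<times> cbox a b \<times> UNIV) phi''"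
    and y': "\<forall>r\<in>cbox a b. (y has_derivative blinfun_apply (y' r)) (at r within cbox a b)"
    and y'_cont: "continuous_on (cbox a b) y'"
begin

text \<open>The derivative of r \<mapsto> (\<theta>, r, y r) in the direction of the i-th coordinate.\<close>

definition lift_dir :: "'n \<Rightarrow> real^'n \<Rightarrow> real \<times> (real^'n) \<times> real" where
  "lift_dir i r = (0, axis i 1, blinfun_apply (y' r) (axis i 1))"

definition dxi :: "'n \<Rightarrow> real^'n \<Rightarrow> real" where
  "dxi i r = blinfun_apply (blinfun_apply (phi'' (0, r, y r)) (1, 0, 0)) (lift_dir i r)"

lemma continuous_on_y: "continuous_on (cbox a b) y"
  using y' by (intro has_derivative_continuous_on[of _ _ "\<lambda>r. blinfun_apply (y' r)"]) blast

lemma continuous_on_phi: "continuous_on ({-\<epsilon>..\<epsilon>} \<times> cbox a b \<times> UNIV) phi"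
  using phi' by (intro has_derivative_continuous_on[of _ _ "\<lambda>p. blinfun_apply (phi' p)"]) blast

lemma continuous_on_phi': "continuous_on ({-\<epsilon>..\<epsilon>} \<times> cbox a b \<times> UNIV) phi'"
  using phi'' by (intro has_derivative_continuous_on[of _ _ "\<lambda>p. blinfun_apply (phi'' p)"]) blast

lemma continuous_on_lift:
  assumes "continuous_on ({-\<epsilon>..\<epsilon>} \<times> cbox a b \<times> UNIV) g"
  shows "continuous_on ({-\<epsilon>..\<epsilon>} \<times> cbox a b) (\<lambda>(\<theta>, r). g (\<theta>, r, y r))"
proof -
  have "continuous_on ({-\<epsilon>..\<epsilon>} \<times> cbox a b) (\<lambda>p. (fst p, snd p, y (snd p)))"
    by (intro continuous_intros continuous_on_compose2[OF continuous_on_y]) auto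
  then show ?thesis unfolding case_prod_beta by (rule continuous_on_compose2[OF assms]) auto
qed

lemma continuous_on_lift_at:
  assumes "continuous_on ({-\<epsilon>..\<epsilon>} \<times> cbox a b \<times> UNIV) g" and "\<theta> \<in> {-\<epsilon>..\<epsilon>}"
  shows "continuous_on (cbox a b) (\<lambda>r. g (\<theta>, r, y r))"
  by (rule continuous_on_compose2[OF assms(1)]) (use assms(2) in \<open>auto intro!: continuous_intros continuous_on_y\<close>)

lemma continuous_on_lift_dir: "continuous_on (cbox a b) (lift_dir i)"
  unfolding lift_dir_def by (intro continuous_intros blinfun.continuous_on y'_cont)

lemma continuous_on_dxi: "continuous_on (cbox a b) (dxi i)"
  unfolding dxi_def using eps
  by (intro blinfun.continuous_on continuous_on_lift_dir continuous_on_const continuous_on_lift_at[OF phi''_cont]) auto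

lemma has_derivative_phi_theta:
  assumes "r \<in> cbox a b" and "s \<in> {-\<epsilon>..\<epsilon>}"
  shows "((\<lambda>\<theta>. phi (\<theta>, r, x)) has_derivative (\<lambda>h. h *\<^sub>R blinfun_apply (phi' (s, r, x)) (1, 0, 0)))
    (at s within {-\<epsilon>..\<epsilon>})"
proof -
  have "((\<lambda>\<theta>. phi (\<theta>, r, x)) has_derivative (\<lambda>h. blinfun_apply (phi' (s, r, x)) (h, 0, 0)))
      (at s within {-\<epsilon>..\<epsilon>})"
  proof (rule has_derivative_in_compose2[of "{-\<epsilon>..\<epsilon>} \<times> cbox a b \<times> UNIV" phi "\<lambda>p. blinfun_apply (phi' p)"])
    show "((\<lambda>\<theta>. (\<theta>, r, x)) has_derivative (\<lambda>h. (h, 0, 0))) (at s within {-\<epsilon>..\<epsilon>})"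
      by (intro has_derivative_Pair has_derivative_ident has_derivative_const)
    show "(\<lambda>\<theta>. (\<theta>, r, x)) ` {-\<epsilon>..\<epsilon>} \<subseteq> {-\<epsilon>..\<epsilon>} \<times> cbox a b \<times> UNIV"
      using assms(1) by auto
    show "(phi has_derivative blinfun_apply (phi' p)) (at p within {-\<epsilon>..\<epsilon>} \<times> cbox a b \<times> UNIV)"
      if "p \<in> {-\<epsilon>..\<epsilon>} \<times> cbox a b \<times> UNIV" for p
      using phi' that by blast
  qed (rule assms(2))
  then show ?thesis by (rule has_derivative_eq_rhs) (rule ext, rule blinfun_apply_first_axis)
qed

lemma has_derivative_phi'_theta:
  assumes "r \<in> cbox a b" and "s \<in> {-\<epsilon>..\<epsilon>}"
  shows "((\<lambda>\<theta>. blinfun_apply (phi' (\<theta>, r, x)) v) has_derivative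
      (\<lambda>h. h *\<^sub>R blinfun_apply (blinfun_apply (phi'' (s, r, x)) (1, 0, 0)) v)) (at s within {-\<epsilon>..\<epsilon>})"
proof -
  have "((\<lambda>\<theta>. phi' (\<theta>, r, x)) has_derivative (\<lambda>h. blinfun_apply (phi'' (s, r, x)) (h, 0, 0)))
      (at s within {-\<epsilon>..\<epsilon>})"
  proof (rule has_derivative_in_compose2[of "{-\<epsilon>..\<epsilon>} \<times> cbox a b \<times> UNIV" phi' "\<lambda>p. blinfun_apply (phi'' p)"])
    show "((\<lambda>\<theta>. (\<theta>, r, x)) has_derivative (\<lambda>h. (h, 0, 0))) (at s within {-\<epsilon>..\<epsilon>})"
      by (intro has_derivative_Pair has_derivative_ident has_derivative_const)
    show "(\<lambda>\<theta>. (\<theta>, r, x)) ` {-\<epsilon>..\<epsilon>} \<subseteq> {-\<epsilon>..\<epsilon>} \<times> cbox a b \<times> UNIV"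
      using assms(1) by auto
    show "(phi' has_derivative blinfun_apply (phi'' p)) (at p within {-\<epsilon>..\<epsilon>} \<times> cbox a b \<times> UNIV)"
      if "p \<in> {-\<epsilon>..\<epsilon>} \<times> cbox a b \<times> UNIV" for p
      using phi'' that by blast
  qed (rule assms(2))
  then have "((\<lambda>\<theta>. phi' (\<theta>, r, x)) has_derivative (\<lambda>h. h *\<^sub>R blinfun_apply (phi'' (s, r, x)) (1, 0, 0)))
      (at s within {-\<epsilon>..\<epsilon>})"
    by (rule has_derivative_eq_rhs) (rule ext, rule blinfun_apply_first_axis)
  from blinfun.FDERIV[OF this has_derivative_const[of v]] show ?thesis
    by (simp add: blinfun.scaleR_left)
qed

lemma xi_eq:
  assumes "r \<in> cbox a b"
  shows "xi phi r x = blinfun_apply (phi' (0, r, x)) (1, 0, 0)"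
proof -
  have "((\<lambda>\<theta>. phi (\<theta>, r, x)) has_derivative (\<lambda>h. h *\<^sub>R blinfun_apply (phi' (0, r, x)) (1, 0, 0))) (at 0)"
    using has_derivative_phi_theta[OF assms, of 0 x] eps at_within_interior[of 0 "{-\<epsilon>..\<epsilon>}"] by simp
  then have "((\<lambda>\<theta>. phi (\<theta>, r, x)) has_real_derivative blinfun_apply (phi' (0, r, x)) (1, 0, 0)) (at 0)"
    by (rule has_derivative_imp_has_field_derivative) simp
  then show ?thesis unfolding xi_def by (rule DERIV_imp_deriv)
qed

lemma continuous_on_xi_y: "continuous_on (cbox a b) (\<lambda>r. xi phi r (y r))"
proof (rule continuous_on_eq)
  show "continuous_on (cbox a b) (\<lambda>r. blinfun_apply (phi' (0, r, y r)) (1, 0, 0))"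
    using eps by (intro blinfun.continuous_on continuous_on_const continuous_on_lift_at[OF continuous_on_phi']) auto
qed (simp add: xi_eq)

lemma variation_linearization:
  "\<forall>e>0. \<forall>\<^sub>F \<theta> in at 0 within {-\<epsilon>..\<epsilon>}. \<forall>r\<in>cbox a b.
     \<bar>phi (\<theta>, r, y r) - phi (0, r, y r) - \<theta> * xi phi r (y r)\<bar> \<le> e * \<bar>\<theta>\<bar>"
proof -
  have "continuous_on ({-\<epsilon>..\<epsilon>} \<times> cbox a b) (\<lambda>(s, r). blinfun_apply (phi' (s, r, y r)) (1, 0, 0))"
    using continuous_on_lift[OF blinfun.continuous_on[OF continuous_on_phi' continuous_on_const]] by simp
  from uniform_linearization[OF eps compact_cbox _ this, where g="\<lambda>\<theta> r. phi (\<theta>, r, y r)"]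
  have "\<forall>e>0. \<forall>\<^sub>F \<theta> in at 0 within {-\<epsilon>..\<epsilon>}. \<forall>r\<in>cbox a b.
      norm (phi (\<theta>, r, y r) - phi (0, r, y r) - \<theta> *\<^sub>R blinfun_apply (phi' (0, r, y r)) (1, 0, 0)) \<le> e * \<bar>\<theta>\<bar>"
    using has_derivative_phi_theta by simp
  then show ?thesis by (auto simp: xi_eq elim!: eventually_mono)
qed

lemma lift_dir_linearization:
  "\<forall>e>0. \<forall>\<^sub>F \<theta> in at 0 within {-\<epsilon>..\<epsilon>}. \<forall>r\<in>cbox a b.
     \<bar>blinfun_apply (phi' (\<theta>, r, y r)) (lift_dir i r) - blinfun_apply (phi' (0, r, y r)) (lift_dir i r)
       - \<theta> * dxi i r\<bar> \<le> e * \<bar>\<theta>\<bar>"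
proof -
  have "continuous_on ({-\<epsilon>..\<epsilon>} \<times> cbox a b) (\<lambda>(s, r). phi'' (s, r, y r))"
    by (rule continuous_on_lift[OF phi''_cont])
  moreover have "continuous_on ({-\<epsilon>..\<epsilon>} \<times> cbox a b) (\<lambda>p. lift_dir i (snd p))"
    by (rule continuous_on_compose2[OF continuous_on_lift_dir]) (auto intro: continuous_intros)
  ultimately have "continuous_on ({-\<epsilon>..\<epsilon>} \<times> cbox a b)
      (\<lambda>p. blinfun_apply (blinfun_apply ((\<lambda>(s, r). phi'' (s, r, y r)) p) (1, 0, 0)) (lift_dir i (snd p)))"
    by (intro blinfun.continuous_on continuous_on_const)
  then have "continuous_on ({-\<epsilon>..\<epsilon>} \<times> cbox a b)
      (\<lambda>(s, r). blinfun_apply (blinfun_apply (phi'' (s, r, y r)) (1, 0, 0)) (lift_dir i r))"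
    by (simp add: case_prod_beta)
  from uniform_linearization[OF eps compact_cbox _ this,
        where g="\<lambda>\<theta> r. blinfun_apply (phi' (\<theta>, r, y r)) (lift_dir i r)"]
  show ?thesis using has_derivative_phi'_theta by (simp add: dxi_def)
qed

lemma has_real_derivative_variation_line:
  assumes r: "r \<in> cbox a b" and s: "s \<in> {a $ i..b $ i}" and \<theta>: "\<theta> \<in> {-\<epsilon>..\<epsilon>}"
  shows "((\<lambda>s. phi (\<theta>, upd r i s, y (upd r i s))) has_real_derivative
     blinfun_apply (phi' (\<theta>, upd r i s, y (upd r i s))) (lift_dir i (upd r i s))) (at s within {a $ i..b $ i})"
proof -
  let ?q = "upd r i s"
  let ?D = "{-\<epsilon>..\<epsilon>} \<times> cbox a b \<times> UNIV"
  have dy: "((\<lambda>s. y (upd r i s)) has_derivative (\<lambda>h. blinfun_apply (y' ?q) (h *\<^sub>R axis i 1)))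
      (at s within {a $ i..b $ i})"
  proof (rule has_derivative_in_compose2[of "cbox a b" y "\<lambda>x. blinfun_apply (y' x)"])
    show "(y has_derivative blinfun_apply (y' x)) (at x within cbox a b)" if "x \<in> cbox a b" for x
      using y' that by blast
  qed (use upd_in_cbox[OF r] s in \<open>auto intro: has_derivative_upd\<close>)
  have "((\<lambda>s. (\<theta>, upd r i s, y (upd r i s))) has_derivative
      (\<lambda>h. (0, h *\<^sub>R axis i 1, blinfun_apply (y' ?q) (h *\<^sub>R axis i 1)))) (at s within {a $ i..b $ i})"
    by (intro has_derivative_Pair has_derivative_const has_derivative_upd dy)
  then have lift: "((\<lambda>s. (\<theta>, upd r i s, y (upd r i s))) has_derivative (\<lambda>h. h *\<^sub>R lift_dir i ?q))
      (at s within {a $ i..b $ i})"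
    by (rule has_derivative_eq_rhs) (simp add: fun_eq_iff lift_dir_def blinfun.scaleR_right)
  have "((\<lambda>s. phi (\<theta>, upd r i s, y (upd r i s))) has_derivative
      (\<lambda>h. blinfun_apply (phi' (\<theta>, ?q, y ?q)) (h *\<^sub>R lift_dir i ?q))) (at s within {a $ i..b $ i})"
  proof (rule has_derivative_in_compose2[of ?D phi "\<lambda>p. blinfun_apply (phi' p)", OF _ _ s lift])
    show "(phi has_derivative blinfun_apply (phi' p)) (at p within ?D)" if "p \<in> ?D" for p
      using phi' that by blast
  qed (use upd_in_cbox[OF r] \<theta> in auto)
  then show ?thesis
    by (rule has_derivative_imp_has_field_derivative) (simp add: blinfun.scaleR_right)
qed

lemma pd_variation:
  assumes "r \<in> cbox a b" and "\<theta> \<in> {-\<epsilon>..\<epsilon>}"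
  shows "pd a b i (\<lambda>r. phi (\<theta>, r, y r)) r = blinfun_apply (phi' (\<theta>, r, y r)) (lift_dir i r)"
  using assms box has_real_derivative_variation_line[OF assms(1) _ assms(2), where s="r $ i" and i=i]
  by (intro pd_eqI) (auto simp: mem_box_cart)

lemma pd_xi_y:
  assumes r: "r \<in> cbox a b"
  shows "pd a b i (\<lambda>r. xi phi r (y r)) r = dxi i r"
proof -
  have line: "upd r i s \<in> cbox a b" if "s \<in> {a $ i..b $ i}" for s
    using upd_in_cbox[OF r that] .
  have "((\<lambda>s. xi phi (upd r i s) (y (upd r i s))) has_real_derivative dxi i (upd r i (r $ i)))
      (at (r $ i) within {a $ i..b $ i})"
  proof (rule mixed_partials_commute[OF eps, where G="\<lambda>\<theta> s. phi (\<theta>, upd r i s, y (upd r i s))"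
        and Gs="\<lambda>\<theta> s. blinfun_apply (phi' (\<theta>, upd r i s, y (upd r i s))) (lift_dir i (upd r i s))"])
    show "r $ i \<in> {a $ i..b $ i}" using r by (simp add: mem_box_cart)
    show "\<forall>e>0. \<forall>\<^sub>F \<theta> in at 0 within {-\<epsilon>..\<epsilon>}. \<forall>s\<in>{a $ i..b $ i}.
        \<bar>phi (\<theta>, upd r i s, y (upd r i s)) - phi (0, upd r i s, y (upd r i s))
          - \<theta> * xi phi (upd r i s) (y (upd r i s))\<bar> \<le> e * \<bar>\<theta>\<bar>"
      using variation_linearization line by (fastforce elim: eventually_mono)
    show "\<forall>e>0. \<forall>\<^sub>F \<theta> in at 0 within {-\<epsilon>..\<epsilon>}. \<forall>s\<in>{a $ i..b $ i}.
        \<bar>blinfun_apply (phi' (\<theta>, upd r i s, y (upd r i s))) (lift_dir i (upd r i s))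
          - blinfun_apply (phi' (0, upd r i s, y (upd r i s))) (lift_dir i (upd r i s))
          - \<theta> * dxi i (upd r i s)\<bar> \<le> e * \<bar>\<theta>\<bar>"
      using lift_dir_linearization line by (fastforce elim: eventually_mono)
  qed (auto intro: has_real_derivative_variation_line[OF r])
  then show ?thesis using r box by (intro pd_eqI) auto
qed

lemma continuous_on_pd_variation:
  assumes \<theta>: "\<theta> \<in> {-\<epsilon>..\<epsilon>}"
  shows "continuous_on (cbox a b) (pd a b i (\<lambda>r. phi (\<theta>, r, y r)))"
proof (rule continuous_on_eq)
  show "continuous_on (cbox a b) (\<lambda>r. blinfun_apply (phi' (\<theta>, r, y r)) (lift_dir i r))"
    using \<theta> by (intro blinfun.continuous_on continuous_on_lift_at[OF continuous_on_phi'] continuous_on_lift_dir)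
qed (simp add: pd_variation[OF _ \<theta>])

lemma pd_variation_linearization:
  "\<forall>e>0. \<forall>\<^sub>F \<theta> in at 0 within {-\<epsilon>..\<epsilon>}. \<forall>r\<in>cbox a b.
     \<bar>pd a b i (\<lambda>r. phi (\<theta>, r, y r)) r - pd a b i (\<lambda>r. phi (0, r, y r)) r - \<theta> * dxi i r\<bar> \<le> e * \<bar>\<theta>\<bar>"
proof (intro allI impI)
  fix e :: real assume "e > 0"
  have "\<forall>\<^sub>F \<theta> in at 0 within {-\<epsilon>..\<epsilon>}. \<theta> \<in> {-\<epsilon>..\<epsilon>}"
    by (simp add: eventually_at_filter)
  moreover have "\<forall>\<^sub>F \<theta> in at 0 within {-\<epsilon>..\<epsilon>}. \<forall>r\<in>cbox a b. \<bar>blinfun_apply (phi' (\<theta>, r, y r)) (lift_dir i r)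
      - blinfun_apply (phi' (0, r, y r)) (lift_dir i r) - \<theta> * dxi i r\<bar> \<le> e * \<bar>\<theta>\<bar>"
    using lift_dir_linearization \<open>e > 0\<close> by blast
  ultimately show "\<forall>\<^sub>F \<theta> in at 0 within {-\<epsilon>..\<epsilon>}. \<forall>r\<in>cbox a b. \<bar>pd a b i (\<lambda>r. phi (\<theta>, r, y r)) r
      - pd a b i (\<lambda>r. phi (0, r, y r)) r - \<theta> * dxi i r\<bar> \<le> e * \<bar>\<theta>\<bar>"
    by eventually_elim (use eps in \<open>auto simp: pd_variation\<close>)
qed

lemma has_derivative_pd_variation:
  assumes t: "t \<in> cbox a b"
  shows "((\<lambda>\<theta>. pd a b i (\<lambda>r. phi (\<theta>, r, y r)) t) has_derivative
      (\<lambda>h. h * pd a b i (\<lambda>r. xi phi r (y r)) t)) (at 0 within {-\<epsilon>..\<epsilon>})"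
proof -
  have 0: "0 \<in> {-\<epsilon>..\<epsilon>}" using eps by simp
  have "((\<lambda>\<theta>. blinfun_apply (phi' (\<theta>, t, y t)) (lift_dir i t)) has_derivative
      (\<lambda>h. h * pd a b i (\<lambda>r. xi phi r (y r)) t)) (at 0 within {-\<epsilon>..\<epsilon>})"
    using has_derivative_phi'_theta[OF t 0] pd_xi_y[OF t] by (simp add: dxi_def)
  then show ?thesis
    by (rule has_derivative_transform_within[OF _ zero_less_one 0]) (simp add: pd_variation[OF t])
qed

lemma has_derivative_BP_variation:
  assumes ki: "ki absolutely_integrable_on {0..b $ i - a $ i}" and t: "t \<in> cbox a b"
  shows "((\<lambda>\<theta>. BP a b i l m ki (\<lambda>r. phi (\<theta>, r, y r)) t) has_derivative
      (\<lambda>h. h * BP a b i l m ki (\<lambda>r. xi phi r (y r)) t)) (at 0 within {-\<epsilon>..\<epsilon>})"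
proof -
  have "BP a b i l m ki (\<lambda>r. xi phi r (y r)) t = KP a b i l m ki (dxi i) t"
    unfolding BP_def by (rule KP_cong[OF t]) (simp add: pd_xi_y)
  moreover have "((\<lambda>\<theta>. KP a b i l m ki (pd a b i (\<lambda>r. phi (\<theta>, r, y r))) t) has_derivative
      (\<lambda>h. h * KP a b i l m ki (dxi i) t)) (at 0 within {-\<epsilon>..\<epsilon>})"
    using eps continuous_on_pd_variation pd_variation_linearization
    by (intro has_derivative_KP_param[OF ki t _ continuous_on_dxi]) auto
  ultimately show ?thesis unfolding BP_def by simp
qed

lemma has_derivative_starv_variation:
  fixes lam mu :: "'n \<Rightarrow> real" and k :: "'n \<Rightarrow> real \<Rightarrow> real"
  assumes kernel: "\<forall>i. k i absolutely_integrable_on {0..b $ i - a $ i}" and t: "t \<in> cbox a b"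
  shows "((\<lambda>\<theta>. starv a b lam mu k (\<lambda>r. phi (\<theta>, r, y r)) t) has_derivative (\<lambda>h. h *\<^sub>R
     (xi phi t (y t),
      \<chi> i. KP a b i (lam i) (mu i) (k i) (\<lambda>r. xi phi r (y r)) t,
      \<chi> i. pd a b i (\<lambda>r. xi phi r (y r)) t,
      \<chi> i. BP a b i (lam i) (mu i) (k i) (\<lambda>r. xi phi r (y r)) t,
      0))) (at 0 within {-\<epsilon>..\<epsilon>})"
proof -
  let ?T = "{-\<epsilon>..\<epsilon>}" and ?\<xi> = "\<lambda>r. xi phi r (y r)"
  have 0: "0 \<in> ?T" using eps by simp
  have deriv_value: "((\<lambda>\<theta>. phi (\<theta>, t, y t)) has_derivative (\<lambda>h. h * xi phi t (y t))) (at 0 within ?T)"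
    using has_derivative_phi_theta[OF t 0] xi_eq[OF t] by simp
  have deriv_KP: "((\<lambda>\<theta>. \<chi> i. KP a b i (lam i) (mu i) (k i) (\<lambda>r. phi (\<theta>, r, y r)) t) has_derivative
      (\<lambda>h. h *\<^sub>R (\<chi> i. KP a b i (lam i) (mu i) (k i) ?\<xi> t))) (at 0 within ?T)"
    using kernel continuous_on_lift_at[OF continuous_on_phi] variation_linearization
    by (intro has_derivative_vec_lambda has_derivative_KP_param[OF _ t _ continuous_on_xi_y 0]) auto
  have "((\<lambda>\<theta>. starv a b lam mu k (\<lambda>r. phi (\<theta>, r, y r)) t) has_derivative
      (\<lambda>h. (h * xi phi t (y t), h *\<^sub>R (\<chi> i. KP a b i (lam i) (mu i) (k i) ?\<xi> t),
        h *\<^sub>R (\<chi> i. pd a b i ?\<xi> t), h *\<^sub>R (\<chi> i. BP a b i (lam i) (mu i) (k i) ?\<xi> t), 0)))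
      (at 0 within ?T)"
    unfolding starv_def using kernel t
    by (intro has_derivative_Pair deriv_value deriv_KP has_derivative_vec_lambda has_derivative_const
        has_derivative_pd_variation has_derivative_BP_variation) auto
  then show ?thesis by (rule has_derivative_eq_rhs) (simp add: fun_eq_iff)
qed

end

lemma starv_cong:
  assumes t: "t \<in> cbox a b" and fg: "\<forall>r\<in>cbox a b. f r = g r"
  shows "starv a b lam mu k f t = starv a b lam mu k g t"
proof -
  have "BP a b i l m ki f t = BP a b i l m ki g t" for i l m ki
    unfolding BP_def using pd_cong[OF _ fg] by (intro KP_cong[OF t]) blast
  then show ?thesis unfolding starv_def using KP_cong[OF t fg] pd_cong[OF t fg] fg t by simp
qed

lemma derivative_zero_if_constant_along_curve:
  fixes \<gamma> :: "real \<Rightarrow> 'a::real_normed_vector" and F :: "'a \<Rightarrow> real"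
  assumes \<epsilon>: "0 < \<epsilon>" and \<gamma>: "(\<gamma> has_derivative (\<lambda>h. h *\<^sub>R v)) (at 0 within {-\<epsilon>..\<epsilon>})"
    and F: "(F has_derivative F') (at (\<gamma> 0) within S)" and S: "\<gamma> ` {-\<epsilon>..\<epsilon>} \<subseteq> S"
    and const: "\<forall>\<theta>\<in>{-\<epsilon>..\<epsilon>}. F (\<gamma> \<theta>) = F (\<gamma> 0)"
  shows "F' v = 0"
proof -
  have "(F has_derivative F') (at (\<gamma> 0) within \<gamma> ` {-\<epsilon>..\<epsilon>})"
    using F S by (rule has_derivative_subset)
  from diff_chain_within[OF \<gamma> this]
  have "((\<lambda>\<theta>. F (\<gamma> \<theta>)) has_derivative (\<lambda>h. F' (h *\<^sub>R v))) (at 0 within {-\<epsilon>..\<epsilon>})"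
    by (simp add: o_def)
  moreover have "at 0 within {-\<epsilon>..\<epsilon>} = at (0::real)"
    using \<epsilon> by (intro at_within_interior) simp
  ultimately have "((\<lambda>\<theta>. F (\<gamma> \<theta>)) has_derivative (\<lambda>h. F' (h *\<^sub>R v))) (at 0)"
    by simp
  then have "((\<lambda>\<theta>. F (\<gamma> 0)) has_derivative (\<lambda>h. F' (h *\<^sub>R v))) (at 0)"
  proof (rule has_derivative_transform_within[OF _ \<epsilon> UNIV_I])
    fix \<theta> :: real assume "dist \<theta> 0 < \<epsilon>"
    then have "\<theta> \<in> {-\<epsilon>..\<epsilon>}" by (auto simp: dist_real_def)
    then show "F (\<gamma> \<theta>) = F (\<gamma> 0)" using const by blast
  qed
  then have "(\<lambda>h. F' (h *\<^sub>R v)) = (\<lambda>h. 0)"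
    by (rule has_derivative_unique[OF _ has_derivative_const])
  from fun_cong[OF this, of 1] show ?thesis by simp
qed

lemma blinfun_apply_coordinate_expansion:
  fixes L :: "(real \<times> (real^'n) \<times> (real^'n) \<times> (real^'n) \<times> (real^'n)) \<Rightarrow>\<^sub>L real"
  shows "blinfun_apply L (x1, x2, x3, x4, 0) =
    x1 * blinfun_apply L (1, 0, 0, 0, 0)
    + (\<Sum>i\<in>UNIV. x2 $ i * blinfun_apply L (0, axis i 1, 0, 0, 0))
    + (\<Sum>i\<in>UNIV. x3 $ i * blinfun_apply L (0, 0, axis i 1, 0, 0))
    + (\<Sum>i\<in>UNIV. x4 $ i * blinfun_apply L (0, 0, 0, axis i 1, 0))"
proof -
  have vec_sum: "(\<chi> i. c i) = (\<Sum>i\<in>UNIV. c i *\<^sub>R axis i (1::real))" for c :: "'n \<Rightarrow> real"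
    using basis_expansion[of "\<chi> i. c i"] by (simp add: scalar_mult_eq_scaleR)
  have "(x1, x2, x3, x4, 0) = x1 *\<^sub>R (1, 0, 0, 0, 0)
    + (\<Sum>i\<in>UNIV. x2 $ i *\<^sub>R ((0::real), axis i (1::real), (0::real^'n), (0::real^'n), (0::real^'n)))
    + (\<Sum>i\<in>UNIV. x3 $ i *\<^sub>R ((0::real), (0::real^'n), axis i (1::real), (0::real^'n), (0::real^'n)))
    + (\<Sum>i\<in>UNIV. x4 $ i *\<^sub>R ((0::real), (0::real^'n), (0::real^'n), axis i (1::real), (0::real^'n)))"
    by (simp add: prod_eq_iff fst_sum snd_sum vec_sum[symmetric])
  then show ?thesis
    by (simp only: blinfun.add_right blinfun.sum_right blinfun.scaleR_right real_scaleR_def)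
qed

lemma deriv_along_curve:
  fixes F :: "'a::real_normed_vector \<Rightarrow> real"
  assumes F: "\<forall>p\<in>S. (F has_derivative blinfun_apply (F' p)) (at p within S)"
    and "range \<gamma> \<subseteq> S" and "(\<gamma> has_derivative (\<lambda>h. h *\<^sub>R u)) (at s0)"
  shows "deriv (\<lambda>s. F (\<gamma> s)) s0 = blinfun_apply (F' (\<gamma> s0)) u"
proof -
  have "((\<lambda>s. F (\<gamma> s)) has_derivative (\<lambda>h. blinfun_apply (F' (\<gamma> s0)) (h *\<^sub>R u))) (at s0 within UNIV)"
    by (rule has_derivative_in_compose2[of S F "\<lambda>p. blinfun_apply (F' p)"]) (use F assms in auto)
  then have "((\<lambda>s. F (\<gamma> s)) has_real_derivative blinfun_apply (F' (\<gamma> s0)) u) (at s0)"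
    by (rule has_derivative_imp_has_field_derivative) (simp add: blinfun.scaleR_right)
  then show ?thesis by (rule DERIV_imp_deriv)
qed

lemma dF_eq_blinfun_apply:
  fixes F :: "real \<times> (real^'n) \<times> (real^'n) \<times> (real^'n) \<times> (real^'n) \<Rightarrow> real"
  assumes F: "\<forall>p\<in>UNIV \<times> UNIV \<times> UNIV \<times> UNIV \<times> C.
      (F has_derivative blinfun_apply (F' p)) (at p within UNIV \<times> UNIV \<times> UNIV \<times> UNIV \<times> C)"
    and t: "t \<in> C"
  shows "dF1 F (x1, x2, x3, x4, t) = blinfun_apply (F' (x1, x2, x3, x4, t)) (1, 0, 0, 0, 0)"
    and "dF2 F i (x1, x2, x3, x4, t) = blinfun_apply (F' (x1, x2, x3, x4, t)) (0, axis i 1, 0, 0, 0)"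
    and "dF3 F i (x1, x2, x3, x4, t) = blinfun_apply (F' (x1, x2, x3, x4, t)) (0, 0, axis i 1, 0, 0)"
    and "dF4 F i (x1, x2, x3, x4, t) = blinfun_apply (F' (x1, x2, x3, x4, t)) (0, 0, 0, axis i 1, 0)"
proof -
  have upd: "((\<lambda>s. upd x i s) has_derivative (\<lambda>h. h *\<^sub>R axis i 1)) (at s)" for x :: "real^'n" and s
    by (rule has_derivative_upd)
  have "((\<lambda>s. (s, x2, x3, x4, t)) has_derivative (\<lambda>h. (h, 0, 0, 0, 0))) (at x1)"
    by (intro has_derivative_Pair has_derivative_ident has_derivative_const)
  then have "((\<lambda>s. (s, x2, x3, x4, t)) has_derivative (\<lambda>h. h *\<^sub>R (1, 0, 0, 0, 0))) (at x1)"
    by (rule has_derivative_eq_rhs) (simp add: fun_eq_iff)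
  from deriv_along_curve[OF F _ this] t
  show "dF1 F (x1, x2, x3, x4, t) = blinfun_apply (F' (x1, x2, x3, x4, t)) (1, 0, 0, 0, 0)"
    by (auto simp: dF1_def)
  have "((\<lambda>s. (x1, upd x2 i s, x3, x4, t)) has_derivative (\<lambda>h. (0, h *\<^sub>R axis i 1, 0, 0, 0))) (at (x2 $ i))"
    by (intro has_derivative_Pair upd has_derivative_const)
  then have "((\<lambda>s. (x1, upd x2 i s, x3, x4, t)) has_derivative (\<lambda>h. h *\<^sub>R (0, axis i 1, 0, 0, 0))) (at (x2 $ i))"
    by (rule has_derivative_eq_rhs) (simp add: fun_eq_iff)
  from deriv_along_curve[OF F _ this] t
  show "dF2 F i (x1, x2, x3, x4, t) = blinfun_apply (F' (x1, x2, x3, x4, t)) (0, axis i 1, 0, 0, 0)"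
    by (auto simp: dF2_def)
  have "((\<lambda>s. (x1, x2, upd x3 i s, x4, t)) has_derivative (\<lambda>h. (0, 0, h *\<^sub>R axis i 1, 0, 0))) (at (x3 $ i))"
    by (intro has_derivative_Pair upd has_derivative_const)
  then have "((\<lambda>s. (x1, x2, upd x3 i s, x4, t)) has_derivative (\<lambda>h. h *\<^sub>R (0, 0, axis i 1, 0, 0))) (at (x3 $ i))"
    by (rule has_derivative_eq_rhs) (simp add: fun_eq_iff)
  from deriv_along_curve[OF F _ this] t
  show "dF3 F i (x1, x2, x3, x4, t) = blinfun_apply (F' (x1, x2, x3, x4, t)) (0, 0, axis i 1, 0, 0)"
    by (auto simp: dF3_def)
  have "((\<lambda>s. (x1, x2, x3, upd x4 i s, t)) has_derivative (\<lambda>h. (0, 0, 0, h *\<^sub>R axis i 1, 0))) (at (x4 $ i))"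
    by (intro has_derivative_Pair upd has_derivative_const)
  then have "((\<lambda>s. (x1, x2, x3, upd x4 i s, t)) has_derivative (\<lambda>h. h *\<^sub>R (0, 0, 0, axis i 1, 0))) (at (x4 $ i))"
    by (rule has_derivative_eq_rhs) (simp add: fun_eq_iff)
  from deriv_along_curve[OF F _ this] t
  show "dF4 F i (x1, x2, x3, x4, t) = blinfun_apply (F' (x1, x2, x3, x4, t)) (0, 0, 0, axis i 1, 0)"
    by (auto simp: dF4_def)
qed

lemma infinitesimal_invariance:
  fixes a b :: "real^'n" and lam mu :: "'n \<Rightarrow> real" and k :: "'n \<Rightarrow> real \<Rightarrow> real"
    and F :: "real \<times> (real^'n) \<times> (real^'n) \<times> (real^'n) \<times> (real^'n) \<Rightarrow> real"
    and phi :: "real \<times> (real^'n) \<times> real \<Rightarrow> real"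
  assumes box: "\<forall>i. a $ i < b $ i"
    and kernel: "\<forall>i. k i absolutely_integrable_on {0 .. b $ i - a $ i}"
    and F_C1: "C1_on (UNIV \<times> UNIV \<times> UNIV \<times> UNIV \<times> cbox a b) F"
    and eps: "\<epsilon> > 0"
    and phi_C2: "C2_on ({-\<epsilon> .. \<epsilon>} \<times> cbox a b \<times> UNIV) phi"
    and phi0: "\<forall>s\<in>cbox a b. \<forall>x. phi (0, s, x) = x"
    and y_C1: "C1_on (cbox a b) y"
    and inv: "\<forall>\<theta>\<in>{-\<epsilon> .. \<epsilon>}.
      F (starv a b lam mu k y t) = F (starv a b lam mu k (\<lambda>r. phi (\<theta>, r, y r)) t)"
    and t: "t \<in> cbox a b"
  shows "xi phi t (y t) * dF1 F (starv a b lam mu k y t)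
    + (\<Sum>i\<in>UNIV. KP a b i (lam i) (mu i) (k i) (\<lambda>s. xi phi s (y s)) t * dF2 F i (starv a b lam mu k y t))
    + (\<Sum>i\<in>UNIV. pd a b i (\<lambda>s. xi phi s (y s)) t * dF3 F i (starv a b lam mu k y t))
    + (\<Sum>i\<in>UNIV. BP a b i (lam i) (mu i) (k i) (\<lambda>s. xi phi s (y s)) t * dF4 F i (starv a b lam mu k y t))
    = 0"
proof -
  let ?S = "UNIV \<times> UNIV \<times> UNIV \<times> UNIV \<times> cbox a b" and ?\<xi> = "\<lambda>s. xi phi s (y s)"
  obtain y' where y': "\<forall>r\<in>cbox a b. (y has_derivative blinfun_apply (y' r)) (at r within cbox a b)"
    and y'_cont: "continuous_on (cbox a b) y'"
    using y_C1 unfolding C1_on_def by blast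
  obtain phi' phi'' where
    phi': "\<forall>p\<in>{-\<epsilon>..\<epsilon>} \<times> cbox a b \<times> UNIV.
      (phi has_derivative blinfun_apply (phi' p)) (at p within {-\<epsilon>..\<epsilon>} \<times> cbox a b \<times> UNIV)"
    and phi'': "\<forall>p\<in>{-\<epsilon>..\<epsilon>} \<times> cbox a b \<times> UNIV.
      (phi' has_derivative blinfun_apply (phi'' p)) (at p within {-\<epsilon>..\<epsilon>} \<times> cbox a b \<times> UNIV)"
    and phi''_cont: "continuous_on ({-\<epsilon>..\<epsilon>} \<times> cbox a b \<times> UNIV) phi''"
    using phi_C2 unfolding C2_on_def C1_on_def by blast
  obtain F' where F': "\<forall>p\<in>?S. (F has_derivative blinfun_apply (F' p)) (at p within ?S)"
    using F_C1 unfolding C1_on_def by blast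
  interpret variation a b \<epsilon> phi phi' phi'' y y'
    using box eps phi' phi'' phi''_cont y' y'_cont by unfold_locales auto
  define p where "p = starv a b lam mu k y t"
  have variation_0: "starv a b lam mu k (\<lambda>r. phi (0, r, y r)) t = p"
    unfolding p_def using phi0 by (intro starv_cong[OF t]) simp
  have "blinfun_apply (F' p) (?\<xi> t, \<chi> i. KP a b i (lam i) (mu i) (k i) ?\<xi> t, \<chi> i. pd a b i ?\<xi> t,
      \<chi> i. BP a b i (lam i) (mu i) (k i) ?\<xi> t, 0) = 0"
  proof (rule derivative_zero_if_constant_along_curve[OF eps has_derivative_starv_variation[OF kernel t],
        where F'="blinfun_apply (F' p)"])
    show "(F has_derivative blinfun_apply (F' p)) (at (starv a b lam mu k (\<lambda>r. phi (0, r, y r)) t) within ?S)"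
      unfolding variation_0 using F' t by (auto simp: p_def starv_def)
    show "(\<lambda>\<theta>. starv a b lam mu k (\<lambda>r. phi (\<theta>, r, y r)) t) ` {-\<epsilon>..\<epsilon>} \<subseteq> ?S"
      using t by (auto simp: starv_def)
    show "\<forall>\<theta>\<in>{-\<epsilon>..\<epsilon>}. F (starv a b lam mu k (\<lambda>r. phi (\<theta>, r, y r)) t)
        = F (starv a b lam mu k (\<lambda>r. phi (0, r, y r)) t)"
      using inv unfolding variation_0 p_def by simp
  qed
  then have "?\<xi> t * blinfun_apply (F' p) (1, 0, 0, 0, 0)
      + (\<Sum>i\<in>UNIV. KP a b i (lam i) (mu i) (k i) ?\<xi> t * blinfun_apply (F' p) (0, axis i 1, 0, 0, 0))
      + (\<Sum>i\<in>UNIV. pd a b i ?\<xi> t * blinfun_apply (F' p) (0, 0, axis i 1, 0, 0))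
      + (\<Sum>i\<in>UNIV. BP a b i (lam i) (mu i) (k i) ?\<xi> t * blinfun_apply (F' p) (0, 0, 0, axis i 1, 0)) = 0"
    \<comment> \<open>a single rewrite: the expansion would also apply to its own right-hand side\<close>
    by (subst (asm) blinfun_apply_coordinate_expansion) simp
  then show ?thesis
    unfolding p_def starv_def by (simp add: dF_eq_blinfun_apply[OF F' t])
qed

lemma invariance_plus_euler_lagrange:
  fixes x e1 :: real and K1 K2 D3 P3 B4 A4 f2 f3 f4 :: "'n::finite \<Rightarrow> real"
  assumes invariance: "x * e1 + (\<Sum>i\<in>UNIV. K1 i * f2 i) + (\<Sum>i\<in>UNIV. D3 i * f3 i) + (\<Sum>i\<in>UNIV. B4 i * f4 i) = 0"
    and euler_lagrange: "e1 + (\<Sum>i\<in>UNIV. K2 i - P3 i - A4 i) = 0"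
  shows "(\<Sum>i\<in>UNIV. (- x * K2 i + f2 i * K1 i) + (D3 i * f3 i + x * P3 i) + (x * A4 i + f4 i * B4 i)) = 0"
proof -
  have "(\<Sum>i\<in>UNIV. (- x * K2 i + f2 i * K1 i) + (D3 i * f3 i + x * P3 i) + (x * A4 i + f4 i * B4 i))
      = (\<Sum>i\<in>UNIV. K1 i * f2 i) + (\<Sum>i\<in>UNIV. D3 i * f3 i) + (\<Sum>i\<in>UNIV. B4 i * f4 i)
        - x * (\<Sum>i\<in>UNIV. K2 i - P3 i - A4 i)"
    by (simp add: sum.distrib sum_subtractf sum_distrib_left algebra_simps)
  also have "\<dots> = 0"
  proof -
    have "(\<Sum>i\<in>UNIV. K2 i - P3 i - A4 i) = - e1" using euler_lagrange by linarith
    with invariance show ?thesis by (simp add: algebra_simps)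
  qed
  finally show ?thesis .
qed

theorem mainTheorem13:
  fixes a b :: "real^'n"
    and lam mu :: "'n \<Rightarrow> real"
    and k :: "'n \<Rightarrow> real \<Rightarrow> real"
    and F :: "real \<times> (real^'n) \<times> (real^'n) \<times> (real^'n) \<times> (real^'n) \<Rightarrow> real"
    and phi :: "real \<times> (real^'n) \<times> real \<Rightarrow> real"
    and \<epsilon> :: real
    and y :: "real^'n \<Rightarrow> real"
    and t :: "real^'n"
  assumes box: "\<forall>i. a $ i < b $ i"
    and kernel: "\<forall>i. k i absolutely_integrable_on {0 .. b $ i - a $ i}"
    and F_C1: "C1_on (UNIV \<times> UNIV \<times> UNIV \<times> UNIV \<times> cbox a b) F"
    and eps: "\<epsilon> > 0"
    and phi_C2: "C2_on ({-\<epsilon> .. \<epsilon>} \<times> cbox a b \<times> UNIV) phi"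
    and phi0: "\<forall>s\<in>cbox a b. \<forall>x. phi (0, s, x) = x"
    and inv_reg: "\<forall>z. admissible a b lam mu k z \<longrightarrow>
            C1_on (cbox a b) (\<lambda>s. xi phi s (z s)) \<and>
            (\<forall>i. continuous_on (cbox a b) (KP a b i (lam i) (mu i) (k i) (\<lambda>s. xi phi s (z s))) \<and>
                 continuous_on (cbox a b) (BP a b i (lam i) (mu i) (k i) (\<lambda>s. xi phi s (z s))))"
    and inv: "\<forall>z. admissible a b lam mu k z \<longrightarrow>
            (\<forall>\<theta>\<in>{-\<epsilon> .. \<epsilon>}. \<forall>s\<in>cbox a b.
               F (starv a b lam mu k z s) = F (starv a b lam mu k (\<lambda>r. phi (\<theta>, r, z r)) s))"
    and ext: "gen_frac_extremal a b lam mu k F y"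
    and t: "t \<in> box a b"
  shows "(\<Sum>i\<in>UNIV.
            II a b i (lam i) (mu i) (k i) (\<lambda>s. xi phi s (y s))
               (\<lambda>s. dF2 F i (starv a b lam mu k y s)) t
          + pd a b i (\<lambda>s. xi phi s (y s) * dF3 F i (starv a b lam mu k y s)) t
          + DD a b i (lam i) (mu i) (k i) (\<lambda>s. xi phi s (y s))
               (\<lambda>s. dF4 F i (starv a b lam mu k y s)) t) = 0"
proof -
  have tc: "t \<in> cbox a b" using t box_subset_cbox by blast
  have adm: "admissible a b lam mu k y"
    and dF3_C1: "\<And>i. C1_on (cbox a b) (\<lambda>s. dF3 F i (starv a b lam mu k y s))"
    and euler_lagrange: "dF1 F (starv a b lam mu k y t) +
        (\<Sum>i\<in>UNIV. KPs a b i (lam i) (mu i) (k i) (\<lambda>s. dF2 F i (starv a b lam mu k y s)) t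
          - pd a b i (\<lambda>s. dF3 F i (starv a b lam mu k y s)) t
          - APs a b i (lam i) (mu i) (k i) (\<lambda>s. dF4 F i (starv a b lam mu k y s)) t) = 0"
    using ext t unfolding gen_frac_extremal_def by auto
  have xi_C1: "C1_on (cbox a b) (\<lambda>s. xi phi s (y s))"
    using inv_reg adm by blast
  have invariance: "xi phi t (y t) * dF1 F (starv a b lam mu k y t)
    + (\<Sum>i\<in>UNIV. KP a b i (lam i) (mu i) (k i) (\<lambda>s. xi phi s (y s)) t * dF2 F i (starv a b lam mu k y t))
    + (\<Sum>i\<in>UNIV. pd a b i (\<lambda>s. xi phi s (y s)) t * dF3 F i (starv a b lam mu k y t))
    + (\<Sum>i\<in>UNIV. BP a b i (lam i) (mu i) (k i) (\<lambda>s. xi phi s (y s)) t * dF4 F i (starv a b lam mu k y t))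
    = 0"
    using adm inv tc
    by (intro infinitesimal_invariance[OF box kernel F_C1 eps phi_C2 phi0]) (auto simp: admissible_def)
  have "pd a b i (\<lambda>s. xi phi s (y s) * dF3 F i (starv a b lam mu k y s)) t
      = pd a b i (\<lambda>s. xi phi s (y s)) t * dF3 F i (starv a b lam mu k y t)
        + xi phi t (y t) * pd a b i (\<lambda>s. dF3 F i (starv a b lam mu k y s)) t" for i
    using box xi_C1 dF3_C1 tc by (intro pd_mult) auto
  then show ?thesis
    unfolding II_def DD_def using invariance_plus_euler_lagrange[OF invariance euler_lagrange] by simp
qed

end
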